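(* Let $n$ and $d$ be positive integers and $N(n,d,0)=\{\mathbf{s}_d\in A(d): s_{(n-1)\bmod d}=s_{d-1}\}$. If $d$ is composite, then $$|N(n,d,0)|=\begin{cases}|A(d)|=\sum_{e\mid d}\mu(e)2^{d/e}, & d\mid n,\\ 2^{d-1}-2-\sum_{e\mid d,\,1<e<d}|N(n,e,0)|, & d\nmid n.\end{cases}$$ If $d$ is prime, then $|N(n,d,0)|=|A(d)|=2^d-2$ if $d\mid n$, and $|N(n,d,0)|=2^{d-1}-2$ if $d\nmid n$.
   Context: Sequences are binary (entries in $\mathbb{Z}_2$); $x\bmod d$ is the least nonnegative residue. A length-$m$ sequence is periodic if it is the concatenation of $m/e$ copies of a length-$e$ sequence for a proper divisor $e$ of $m$, aperiodic otherwise. $A(d)$ is the set of aperiodic binary sequences $\mathbf{s}_d=(s_0,\dots,s_{d-1})$ of length $d$. $\mu$ is the Möbius function: $\mu(1)=1$, $\mu(m)=(-1)^k$ if $m$ is a product of $k$ distinct primes, $\mu(m)=0$ if $m$ is divisible by the square of a prime. *)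

theory Defs
  imports "HOL-Computational_Algebra.Primes"
begin

text \<open>Binary sequences (entries in Z_2) are lists of bool of the given length.\<close>

definition periodic_seq :: "bool list \<Rightarrow> bool" where
  "periodic_seq s \<longleftrightarrow>
     (\<exists>e u. e dvd length s \<and> e < length s \<and> length u = e \<and>
            s = concat (replicate (length s div e) u))"

definition aperiodic_seqs :: "nat \<Rightarrow> bool list set" where
  "aperiodic_seqs d = {s. length s = d \<and> \<not> periodic_seq s}"

definition N0 :: "nat \<Rightarrow> nat \<Rightarrow> bool list set" where
  "N0 n d = {s \<in> aperiodic_seqs d. s ! ((n - 1) mod d) = s ! (d - 1)}"

definition mobius :: "nat \<Rightarrow> int" where
  "mobius m = (if \<exists>p. prime p \<and> p ^ 2 dvd m then 0
               else (-1) ^ card (prime_factors m))"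

end

theory Submission
  imports Defs
begin

text \<open>
  Every binary sequence of length d is, in exactly one way, a repetition of an aperiodic
  sequence whose length e divides d (its primitive root; e is its least period, and
  uniqueness holds because periods are closed under gcd). Counting all sequences this
  way gives 2^d = \<Sum>_{e|d} |A(e)|, whence |A(d)| by Moebius inversion. The condition
  s_{(n-1) mod d} = s_{d-1} is inherited by and from the primitive root, so counting the
  sequences satisfying it gives \<Sum>_{e|d} |N(n,e,0)|; when d does not divide n it compares
  two distinct positions and is met by exactly 2^{d-1} sequences, while for d | n it holds
  for every sequence. Separating the divisors 1 and d (and noting |N(n,1,0)| = 2) yields
  the recursion.
\<close>

definition repeat_list :: "nat \<Rightarrow> 'a list \<Rightarrow> 'a list" where
  "repeat_list k u = concat (replicate k u)"

lemma length_repeat_list [simp]: "length (repeat_list k u) = k * length u"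
  unfolding repeat_list_def by (induction k) auto

lemma nth_repeat_list:
  "i < k * length u \<Longrightarrow> repeat_list k u ! i = u ! (i mod length u)"
proof (induction k arbitrary: i)
  case (Suc k)
  have Suc_unfold: "repeat_list (Suc k) u = u @ repeat_list k u"
    unfolding repeat_list_def by simp
  show ?case
  proof (cases "i < length u")
    case False
    then have "(i - length u) mod length u = i mod length u"
      by (simp add: le_mod_geq)
    with False Suc show ?thesis
      by (simp add: Suc_unfold nth_append)
  qed (simp add: Suc_unfold nth_append)
qed simp

lemma take_repeat_list: "0 < k \<Longrightarrow> take (length u) (repeat_list k u) = u"
  unfolding repeat_list_def by (cases k) auto

definition is_period :: "'a list \<Rightarrow> nat \<Rightarrow> bool" where
  "is_period s e \<longleftrightarrow> 0 < e \<and> e dvd length s \<and> (\<forall>i<length s. s ! i = s ! (i mod e))"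

lemma is_period_length: "0 < length s \<Longrightarrow> is_period s (length s)"
  unfolding is_period_def by simp

lemma is_period_repeat_list:
  assumes "0 < length u"
  shows "is_period (repeat_list k u) (length u)"
proof -
  have "i mod length u < k * length u" if "i < k * length u" for i
    using that mod_less_eq_dividend[of i "length u"] by linarith
  then show ?thesis
    using assms unfolding is_period_def by (simp add: nth_repeat_list)
qed

lemma repeat_list_take_period:
  assumes "is_period s e"
  shows "repeat_list (length s div e) (take e s) = s"
proof (cases "s = []")
  case False
  have e: "0 < e" "e dvd length s" and per: "\<forall>i<length s. s ! i = s ! (i mod e)"
    using assms unfolding is_period_def by auto
  with False have "e \<le> length s"
    by (simp add: dvd_imp_le)
  then have len: "length (take e s) = e"
    by simp
  show ?thesis
  proof (rule nth_equalityI)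
    show "length (repeat_list (length s div e) (take e s)) = length s"
      using e len by simp
    fix i assume "i < length (repeat_list (length s div e) (take e s))"
    with e len per show "repeat_list (length s div e) (take e s) ! i = s ! i"
      by (simp add: nth_repeat_list)
  qed
qed (simp add: repeat_list_def)

definition shift_invariant :: "(nat \<Rightarrow> 'a) \<Rightarrow> nat \<Rightarrow> bool" where
  "shift_invariant f k \<longleftrightarrow> (\<forall>i. f (i + k) = f i)"

lemma shift_invariant_mult:
  assumes "shift_invariant f k"
  shows "shift_invariant f (m * k)"
proof (induction m)
  case (Suc m)
  with assms show ?case
    unfolding shift_invariant_def by (simp add: add.assoc[symmetric])
qed (simp add: shift_invariant_def)

lemma shift_invariant_mod:
  "shift_invariant f k \<Longrightarrow> f i = f (i mod k)"
  using shift_invariant_mult[of f k "i div k"] unfolding shift_invariant_def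
  by (metis mod_div_mult_eq)

lemma shift_invariant_gcd:
  assumes a: "shift_invariant f a" and b: "shift_invariant f b"
  shows "shift_invariant f (gcd a b)"
proof (cases "a = 0")
  case False
  then obtain x y where xy: "a * x = b * y + gcd a b"
    using bezout_nat by blast
  show ?thesis unfolding shift_invariant_def
  proof
    fix i
    have "f (i + gcd a b) = f (i + gcd a b + y * b)"
      using shift_invariant_mult[OF b] unfolding shift_invariant_def by simp
    also have "\<dots> = f (i + x * a)"
      using xy by (simp add: algebra_simps)
    also have "\<dots> = f i"
      using shift_invariant_mult[OF a] unfolding shift_invariant_def by simp
    finally show "f (i + gcd a b) = f i" .
  qed
qed (use b in simp)

lemma is_period_iff_shift_invariant:
  assumes "0 < length s" "0 < e" "e dvd length s"
  shows "is_period s e \<longleftrightarrow> shift_invariant (\<lambda>i. s ! (i mod length s)) e"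
proof
  assume per: "is_period s e"
  show "shift_invariant (\<lambda>i. s ! (i mod length s)) e"
    unfolding shift_invariant_def
  proof
    fix i
    have "s ! ((i + e) mod length s) = s ! ((i + e) mod e)"
      using per assms by (simp add: is_period_def mod_mod_cancel)
    also have "\<dots> = s ! (i mod length s)"
      using per assms by (simp add: is_period_def mod_mod_cancel)
    finally show "s ! ((i + e) mod length s) = s ! (i mod length s)" .
  qed
next
  assume "shift_invariant (\<lambda>i. s ! (i mod length s)) e"
  then have "s ! i = s ! (i mod e)" if "i < length s" for i
    using shift_invariant_mod[of _ e i] that assms
    by (metis dvd_imp_le mod_less mod_less_divisor order.strict_trans2)
  with assms show "is_period s e"
    unfolding is_period_def by blast
qed

lemma is_period_gcd:
  assumes "is_period s a" "is_period s b" "0 < length s"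
  shows "is_period s (gcd a b)"
proof -
  have ab: "0 < a" "a dvd length s" "0 < b" "b dvd length s"
    using assms unfolding is_period_def by auto
  then have "0 < gcd a b" "gcd a b dvd length s"
    by (auto intro: dvd_trans)
  with ab assms show ?thesis
    by (simp add: is_period_iff_shift_invariant shift_invariant_gcd)
qed

lemma is_period_take:
  assumes per: "is_period s g" and "g dvd e" "e \<le> length s"
  shows "is_period (take e s) g"
proof -
  have "take e s ! i = take e s ! (i mod g)" if "i < e" for i
  proof -
    have "i mod g < e"
      using that mod_less_eq_dividend[of i g] by linarith
    with that per \<open>e \<le> length s\<close> show ?thesis
      unfolding is_period_def by (metis less_le_trans nth_take)
  qed
  moreover have "0 < g" "g dvd e"
    using assms unfolding is_period_def by auto
  ultimately show ?thesis
    using \<open>e \<le> length s\<close> unfolding is_period_def by (simp add: min_absorb2)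
qed

lemma is_period_of_take:
  assumes per_e: "is_period s e" and per_g: "is_period (take e s) g"
  shows "is_period s g"
proof (cases "s = []")
  case False
  have e: "0 < e" "e \<le> length s" "e dvd length s"
    using per_e False unfolding is_period_def by (auto dest: dvd_imp_le)
  then have g: "0 < g" "g dvd e"
    using per_g unfolding is_period_def by (auto simp: min_absorb2)
  have "s ! i = s ! (i mod g)" if "i < length s" for i
  proof -
    have "g \<le> e"
      using e(1) g(2) by (rule dvd_imp_le[rotated])
    then have lt: "i mod e < e" "i mod g < e"
      using e(1) g(1) by (auto intro: less_le_trans[OF mod_less_divisor])
    have "s ! i = take e s ! (i mod e)"
      using per_e that lt(1) unfolding is_period_def by simp
    also have "\<dots> = take e s ! (i mod e mod g)"
      using per_g lt(1) e(2) unfolding is_period_def by (simp add: min_absorb2)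
    also have "\<dots> = s ! (i mod g)"
      using g lt(2) by (simp add: mod_mod_cancel)
    finally show ?thesis .
  qed
  with e g show ?thesis
    unfolding is_period_def by (blast intro: dvd_trans)
qed (use per_g in \<open>simp add: is_period_def\<close>)

lemma periodic_seq_iff_is_period:
  "periodic_seq s \<longleftrightarrow> (\<exists>e < length s. is_period s e)"
proof
  assume "periodic_seq s"
  then obtain e u where e: "e dvd length s" "e < length s" "length u = e"
      and s: "s = repeat_list (length s div e) u"
    unfolding periodic_seq_def repeat_list_def by blast
  then have "0 < e"
    by (auto intro: Nat.gr0I)
  then have "is_period (repeat_list (length s div e) u) e"
    using is_period_repeat_list[of u] e(3) by simp
  with e(2) s show "\<exists>e < length s. is_period s e"
    by auto
next
  assume "\<exists>e < length s. is_period s e"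
  then obtain e where e: "e < length s" "is_period s e"
    by blast
  then have "e dvd length s" "length (take e s) = e"
    unfolding is_period_def by auto
  with e show "periodic_seq s"
    unfolding periodic_seq_def repeat_list_def[symmetric]
    using repeat_list_take_period[OF e(2)] by metis
qed

lemma in_aperiodic_seqs_iff:
  "u \<in> aperiodic_seqs e \<longleftrightarrow> length u = e \<and> (\<forall>g. is_period u g \<longrightarrow> e \<le> g)"
  unfolding aperiodic_seqs_def periodic_seq_iff_is_period by (auto simp: not_less)

lemma finite_aperiodic_seqs: "finite (aperiodic_seqs e)"
  by (rule finite_subset[OF _ finite_lists_length_eq[of UNIV e]])
    (auto simp: aperiodic_seqs_def)

lemma repeat_list_aperiodic_inj:
  assumes u: "u \<in> aperiodic_seqs e" and v: "v \<in> aperiodic_seqs e'"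
    and "e dvd d" "e' dvd d" "0 < d"
    and eq: "repeat_list (d div e) u = repeat_list (d div e') v"
  shows "e = e' \<and> u = v"
proof -
  let ?s = "repeat_list (d div e) u"
  let ?g = "gcd e e'"
  have len: "length u = e" "length v = e'"
    using u v by (simp_all add: aperiodic_seqs_def)
  have pos: "0 < e" "0 < e'" "e \<le> d" "e' \<le> d"
    using assms by (auto intro: Nat.gr0I dvd_imp_le)
  have len_s: "length ?s = d"
    using len \<open>e dvd d\<close> by simp
  have "is_period ?s e"
    using is_period_repeat_list[of u] len pos by simp
  moreover have "is_period ?s e'"
    unfolding eq using is_period_repeat_list[of v] len pos by simp
  ultimately have per: "is_period ?s ?g"
    using len_s \<open>0 < d\<close> by (simp add: is_period_gcd)
  have take_s: "take e ?s = u" "take e' ?s = v"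
    using take_repeat_list[of "d div e" u] take_repeat_list[of "d div e'" v] eq len pos assms(3,4)
    by (simp_all add: div_greater_zero_iff)
  have "is_period u ?g" "is_period v ?g"
    using is_period_take[OF per, of e] is_period_take[OF per, of e'] take_s len_s pos
    by simp_all
  then have "e \<le> ?g" "e' \<le> ?g"
    using u v by (simp_all add: in_aperiodic_seqs_iff)
  moreover have "?g \<le> e" "?g \<le> e'"
    using pos by (simp_all add: gcd_le1_nat gcd_le2_nat)
  ultimately show ?thesis
    using take_s by simp
qed

lemma repeat_list_aperiodic_surj:
  fixes s :: "bool list"
  assumes "length s = d" "0 < d"
  obtains e u where "e dvd d" "u \<in> aperiodic_seqs e" "s = repeat_list (d div e) u"
proof -
  define e where "e = (LEAST e. is_period s e)"
  have per: "is_period s e"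
    unfolding e_def using is_period_length assms by (metis LeastI)
  have least: "e \<le> g" if "is_period s g" for g
    unfolding e_def using that by (rule Least_le)
  have e: "e dvd d" "e \<le> d"
    using per least[OF is_period_length] assms unfolding is_period_def by auto
  have "take e s \<in> aperiodic_seqs e"
    unfolding in_aperiodic_seqs_iff
    using e assms least is_period_of_take[OF per] by auto
  with e show thesis
    using that repeat_list_take_period[OF per] assms by auto
qed

lemma bij_betw_repeat_list_aperiodic:
  assumes "0 < d"
  shows "bij_betw (\<lambda>(e, u). repeat_list (d div e) u)
           (SIGMA e:{e. e dvd d}. aperiodic_seqs e) {s. length s = d}"
  unfolding bij_betw_def
proof
  show "inj_on (\<lambda>(e, u). repeat_list (d div e) u) (SIGMA e:{e. e dvd d}. aperiodic_seqs e)"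
    using repeat_list_aperiodic_inj assms by (auto simp: inj_on_def)
  show "(\<lambda>(e, u). repeat_list (d div e) u) ` (SIGMA e:{e. e dvd d}. aperiodic_seqs e)
          = {s. length s = d}"
  proof (intro equalityI subsetI)
    fix s :: "bool list" assume "s \<in> {s. length s = d}"
    then obtain e u where "e dvd d" "u \<in> aperiodic_seqs e" "s = repeat_list (d div e) u"
      using repeat_list_aperiodic_surj assms by blast
    then show "s \<in> (\<lambda>(e, u). repeat_list (d div e) u) ` (SIGMA e:{e. e dvd d}. aperiodic_seqs e)"
      by force
  qed (auto simp: aperiodic_seqs_def)
qed

lemma card_lists_eq_sum_aperiodic:
  fixes Q :: "bool list \<Rightarrow> bool"
  assumes "0 < d"
    and Q: "\<And>e u. e dvd d \<Longrightarrow> u \<in> aperiodic_seqs e \<Longrightarrow> Q (repeat_list (d div e) u) = Q u"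
  shows "card {s. length s = d \<and> Q s} = (\<Sum>e | e dvd d. card {u \<in> aperiodic_seqs e. Q u})"
proof -
  let ?f = "\<lambda>(e, u). repeat_list (d div e) u"
  let ?A = "SIGMA e:{e. e dvd d}. {u \<in> aperiodic_seqs e. Q u}"
  note bij = bij_betw_repeat_list_aperiodic[OF assms(1)]
  have "?f ` ?A = {s. length s = d \<and> Q s}"
  proof (intro equalityI subsetI)
    fix s assume s: "s \<in> {s. length s = d \<and> Q s}"
    then have "s \<in> ?f ` (SIGMA e:{e. e dvd d}. aperiodic_seqs e)"
      using bij unfolding bij_betw_def by simp
    then obtain e u where "e dvd d" "u \<in> aperiodic_seqs e" "s = repeat_list (d div e) u"
      by auto
    with Q s show "s \<in> ?f ` ?A"
      by force
  qed (use bij Q in \<open>auto simp: bij_betw_def\<close>)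
  then have "bij_betw ?f ?A {s. length s = d \<and> Q s}"
    by (intro bij_betw_subset[OF bij]) auto
  then have "card {s. length s = d \<and> Q s} = card ?A"
    by (simp add: bij_betw_same_card)
  also have "\<dots> = (\<Sum>e | e dvd d. card {u \<in> aperiodic_seqs e. Q u})"
    using assms(1) finite_aperiodic_seqs by (intro card_SigmaI) auto
  finally show ?thesis .
qed

lemma mobius_prime_mult:
  fixes p k :: nat
  assumes p: "prime p" and "0 < k"
  shows "mobius (p * k) = (if p dvd k then 0 else - mobius k)"
proof (cases "p dvd k")
  case True
  then have "p ^ 2 dvd p * k"
    by (simp add: power2_eq_square)
  with p True show ?thesis
    unfolding mobius_def by auto
next
  case False
  have "q ^ 2 dvd p * k \<longleftrightarrow> q ^ 2 dvd k" if q: "prime q" for q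
  proof (cases "q = p")
    case True
    with p False show ?thesis
      by (auto simp: power2_eq_square dest: dvd_mult_left)
  next
    case False
    with p q have "coprime (q ^ 2) p"
      by (simp add: primes_coprime)
    then show ?thesis
      by (simp add: coprime_dvd_mult_right_iff)
  qed
  moreover have "prime_factors (p * k) = insert p (prime_factors k)"
    using p \<open>0 < k\<close> by (simp add: prime_factors_product prime_prime_factors)
  moreover have "p \<notin> prime_factors k"
    using False by (auto dest: in_prime_factors_imp_dvd)
  ultimately show ?thesis
    using False \<open>0 < k\<close> unfolding mobius_def by (simp add: card_insert_if)
qed

lemma sum_mobius_divisors:
  fixes m :: nat
  assumes "0 < m"
  shows "(\<Sum>e | e dvd m. mobius e) = (if m = 1 then 1 else 0)"
proof (cases "m = 1")
  case False
  with assms obtain p where p: "prime p" "p dvd m"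
    by (metis prime_factor_nat)
  \<comment> \<open>The divisors p * k (k dvd m div p) cancel, via mobius_prime_mult, those prime to p.\<close>
  let ?D = "{e. e dvd m}" and ?D' = "{k. k dvd m div p}"
  have "0 < m div p"
    using assms p by (simp add: div_greater_zero_iff dvd_imp_le prime_gt_0_nat)
  then have fin: "finite ?D" "finite ?D'"
    using assms by simp_all
  have "{e \<in> ?D. p dvd e} = (*) p ` ?D'"
    using p by (auto simp: dvd_div_iff_mult mult.commute elim!: dvdE)
  then have "(\<Sum>e | e \<in> ?D \<and> p dvd e. mobius e) = (\<Sum>k\<in>?D'. mobius (p * k))"
    using p by (simp add: sum.reindex inj_on_def prime_gt_0_nat)
  also have "\<dots> = (\<Sum>k\<in>?D'. if p dvd k then 0 else - mobius k)"
    using p \<open>0 < m div p\<close> by (intro sum.cong refl mobius_prime_mult) (auto intro: Nat.gr0I)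
  also have "\<dots> = - (\<Sum>k\<in>?D'. if \<not> p dvd k then mobius k else 0)"
    unfolding sum_negf[symmetric] by (rule sum.cong) auto
  also have "\<dots> = - (\<Sum>k | k \<in> ?D' \<and> \<not> p dvd k. mobius k)"
    using sum.inter_filter[OF fin(2), of mobius "\<lambda>k. \<not> p dvd k"] by simp
  also have "{k \<in> ?D'. \<not> p dvd k} = {e \<in> ?D. \<not> p dvd e}"
  proof -
    have "k * p dvd m" if "k dvd m" "\<not> p dvd k" for k
      using that p prime_imp_coprime[OF p(1) that(2)]
      by (intro divides_mult) (simp_all add: coprime_commute)
    then show ?thesis
      using p by (auto simp: dvd_div_iff_mult intro: dvd_mult_left)
  qed
  finally have "(\<Sum>e | e \<in> ?D \<and> p dvd e. mobius e) + (\<Sum>e | e \<in> ?D \<and> \<not> p dvd e. mobius e) = 0"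
    by simp
  moreover have "?D = {e \<in> ?D. p dvd e} \<union> {e \<in> ?D. \<not> p dvd e}"
    by blast
  ultimately show ?thesis
    using fin False by (metis (no_types, lifting) sum.union_disjoint disjoint_iff
        finite_Un mem_Collect_eq)
next
  case True
  then show ?thesis
    by (simp add: mobius_def)
qed

lemma mobius_inversion:
  fixes f g :: "nat \<Rightarrow> int"
  assumes g: "\<And>m. 0 < m \<Longrightarrow> g m = (\<Sum>k | k dvd m. f k)" and "0 < d"
  shows "(\<Sum>e | e dvd d. mobius e * g (d div e)) = f d"
proof -
  let ?D = "{e. e dvd d}"
  have fin: "finite ?D"
    using \<open>0 < d\<close> by simp
  have divisors_div: "{k. k dvd d div e} = {k \<in> ?D. e * k dvd d}" if "e \<in> ?D" for e
    using that \<open>0 < d\<close> by (auto simp: dvd_div_iff_mult mult.commute intro: Nat.gr0I dvd_mult_left)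
  have "(\<Sum>e\<in>?D. mobius e * g (d div e)) = (\<Sum>e\<in>?D. \<Sum>k | k \<in> ?D \<and> e * k dvd d. mobius e * f k)"
  proof (rule sum.cong[OF refl])
    fix e assume "e \<in> ?D"
    then have "0 < d div e"
      using \<open>0 < d\<close> by (metis dvd_div_eq_0_iff mem_Collect_eq neq0_conv)
    with \<open>e \<in> ?D\<close> show "mobius e * g (d div e) = (\<Sum>k | k \<in> ?D \<and> e * k dvd d. mobius e * f k)"
      by (simp add: g divisors_div sum_distrib_left)
  qed
  also have "\<dots> = (\<Sum>k\<in>?D. \<Sum>e | e \<in> ?D \<and> e * k dvd d. mobius e * f k)"
    by (rule sum.swap_restrict[OF fin fin])
  also have "\<dots> = (\<Sum>k\<in>?D. f k * (\<Sum>e | e dvd d div k. mobius e))"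
    using divisors_div by (intro sum.cong refl) (auto simp: sum_distrib_left mult.commute)
  also have "\<dots> = (\<Sum>k\<in>?D. if k = d then f k else 0)"
  proof (rule sum.cong[OF refl])
    fix k assume "k \<in> ?D"
    then have "0 < d div k" "d div k = 1 \<longleftrightarrow> k = d"
      using \<open>0 < d\<close> by (auto elim!: dvdE)
    then show "f k * (\<Sum>e | e dvd d div k. mobius e) = (if k = d then f k else 0)"
      by (simp add: sum_mobius_divisors)
  qed
  also have "\<dots> = f d"
    using fin by (simp add: sum.delta')
  finally show ?thesis .
qed

lemma minus_one_mod_eq_iff:
  fixes n d :: nat
  assumes "0 < n" "0 < d"
  shows "(n - 1) mod d = d - 1 \<longleftrightarrow> d dvd n"
proof
  assume last: "(n - 1) mod d = d - 1"
  have "n = (n - 1) div d * d + (n - 1) mod d + 1"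
    using assms(1) by simp
  also have "\<dots> = ((n - 1) div d + 1) * d"
    using last assms(2) by simp
  finally show "d dvd n"
    by (metis dvd_triv_right)
next
  assume "d dvd n"
  then obtain m where "n = d * m" "0 < m"
    using assms(1) by (auto elim!: dvdE)
  then have "n - 1 = (d - 1) + (m - 1) * d"
    using assms(2) by (cases m) (auto simp: algebra_simps)
  then show "(n - 1) mod d = d - 1"
    using assms(2) by (metis mod_mult_self1 mod_less diff_less zero_less_one)
qed

lemma card_lists_nth_eq:
  assumes "i < d" "j < d" "i \<noteq> j"
  shows "card {s :: bool list. length s = d \<and> s ! i = s ! j} = 2 ^ (d - 1)"
proof -
  let ?L = "{s :: bool list. length s = d}"
  let ?S = "{s \<in> ?L. s ! i = s ! j}"
  let ?flip = "\<lambda>s :: bool list. s[j := \<not> s ! j]"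
  have "bij_betw ?flip ?S (?L - ?S)"
    by (rule bij_betw_byWitness[where f' = ?flip]) (use assms in auto)
  then have "card ?S = card (?L - ?S)"
    by (rule bij_betw_same_card)
  also have "\<dots> = 2 ^ d - card ?S"
    using finite_lists_length_eq[of "UNIV :: bool set" d] card_lists_length_eq[of "UNIV :: bool set" d]
    by (subst card_Diff_subset) (auto intro: finite_subset)
  finally show ?thesis
    using assms by (cases d) auto
qed

definition matches_last :: "nat \<Rightarrow> 'a list \<Rightarrow> bool" where
  "matches_last n s \<longleftrightarrow> s ! ((n - 1) mod length s) = s ! (length s - 1)"

lemma N0_eq_matches_last: "N0 n d = {s \<in> aperiodic_seqs d. matches_last n s}"
  unfolding N0_def matches_last_def aperiodic_seqs_def by auto

lemma matches_last_repeat_list: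
  assumes "e dvd d" "0 < d" "length u = e"
  shows "matches_last n (repeat_list (d div e) u) \<longleftrightarrow> matches_last n u"
proof -
  have "0 < e"
    using assms by (auto intro: Nat.gr0I)
  then have "repeat_list (d div e) u ! ((n - 1) mod d) = u ! ((n - 1) mod e)"
    "repeat_list (d div e) u ! (d - 1) = u ! (e - 1)"
    using assms minus_one_mod_eq_iff[of d e]
    by (simp_all add: nth_repeat_list mod_mod_cancel)
  with assms show ?thesis
    unfolding matches_last_def by simp
qed

lemma sum_card_aperiodic_seqs:
  assumes "0 < d"
  shows "(\<Sum>e | e dvd d. card (aperiodic_seqs e)) = 2 ^ d"
  using card_lists_eq_sum_aperiodic[OF assms, of "\<lambda>_. True"]
    card_lists_length_eq[of "UNIV :: bool set" d]
  by simp

lemma sum_card_N0: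
  assumes "0 < d" "\<not> d dvd n"
  shows "(\<Sum>e | e dvd d. card (N0 n e)) = 2 ^ (d - 1)"
proof -
  have "0 < n"
    using assms(2) by (auto intro: Nat.gr0I)
  with assms have "(n - 1) mod d \<noteq> d - 1"
    using minus_one_mod_eq_iff by blast
  have "(\<Sum>e | e dvd d. card (N0 n e)) = card {s :: bool list. length s = d \<and> matches_last n s}"
    unfolding N0_eq_matches_last
    by (rule card_lists_eq_sum_aperiodic[symmetric, OF assms(1)])
      (simp add: matches_last_repeat_list aperiodic_seqs_def assms(1))
  also have "\<dots> = card {s :: bool list. length s = d \<and> s ! ((n - 1) mod d) = s ! (d - 1)}"
    unfolding matches_last_def by (metis (lifting))
  also have "\<dots> = 2 ^ (d - 1)"
    using assms \<open>(n - 1) mod d \<noteq> d - 1\<close> by (intro card_lists_nth_eq) auto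
  finally show ?thesis .
qed

lemma N0_eq_aperiodic_seqs:
  assumes "d dvd n" "0 < n"
  shows "N0 n d = aperiodic_seqs d"
  using minus_one_mod_eq_iff[of n d] assms unfolding N0_def by (auto intro: Nat.gr0I)

lemma card_aperiodic_seqs_1: "card (aperiodic_seqs 1) = 2"
proof -
  have "aperiodic_seqs 1 = {s. length s = 1}"
    by (auto simp: in_aperiodic_seqs_iff is_period_def)
  then show ?thesis
    using card_lists_length_eq[of "UNIV :: bool set" 1] by simp
qed

lemma card_aperiodic_seqs:
  assumes "0 < d"
  shows "int (card (aperiodic_seqs d)) = (\<Sum>e | e dvd d. mobius e * 2 ^ (d div e))"
  using sum_card_aperiodic_seqs
  by (intro mobius_inversion[symmetric, OF _ assms]) (metis of_nat_numeral of_nat_power of_nat_sum)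

lemma sum_divisors_split:
  fixes g :: "nat \<Rightarrow> 'a :: comm_monoid_add"
  assumes "1 < d"
  shows "(\<Sum>e | e dvd d. g e) = g 1 + g d + (\<Sum>e | e dvd d \<and> 1 < e \<and> e < d. g e)"
proof -
  have "{e. e dvd d} = insert 1 (insert d {e. e dvd d \<and> 1 < e \<and> e < d})"
    using assms by (auto dest: dvd_imp_le intro: Nat.gr0I)
  moreover have "finite {e. e dvd d \<and> 1 < e \<and> e < d}"
    by simp
  ultimately show ?thesis
    using assms by (simp add: add.assoc)
qed

lemma sum_proper_divisors_prime:
  fixes p :: nat
  assumes "prime p"
  shows "(\<Sum>e | e dvd p \<and> 1 < e \<and> e < p. g e) = 0"
proof -
  have "{e. e dvd p \<and> 1 < e \<and> e < p} = {}"
    using assms by (auto simp: prime_nat_iff)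
  then show ?thesis
    by (simp only: sum.empty)
qed

lemma card_aperiodic_seqs_prime:
  assumes "prime p"
  shows "int (card (aperiodic_seqs p)) = 2 ^ p - 2"
proof -
  have "(2::int) ^ p = (\<Sum>e | e dvd p. int (card (aperiodic_seqs e)))"
    using sum_card_aperiodic_seqs[OF prime_gt_0_nat[OF assms]]
    by (metis of_nat_numeral of_nat_power of_nat_sum)
  also have "\<dots> = int (card (aperiodic_seqs 1)) + int (card (aperiodic_seqs p))
                    + (\<Sum>e | e dvd p \<and> 1 < e \<and> e < p. int (card (aperiodic_seqs e)))"
    by (rule sum_divisors_split[OF prime_gt_1_nat[OF assms]])
  also have "\<dots> = 2 + int (card (aperiodic_seqs p))"
    using card_aperiodic_seqs_1 sum_proper_divisors_prime[OF assms] by simp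
  finally show ?thesis
    by simp
qed

lemma card_N0_not_dvd:
  assumes "0 < d" "\<not> d dvd n"
  shows "int (card (N0 n d)) = 2 ^ (d - 1) - 2
           - (\<Sum>e | e dvd d \<and> 1 < e \<and> e < d. int (card (N0 n e)))"
proof -
  have "0 < n" "1 < d"
    using assms by (auto intro: Nat.gr0I) (cases "d = 1"; simp)
  have "(2::int) ^ (d - 1) = (\<Sum>e | e dvd d. int (card (N0 n e)))"
    using sum_card_N0[OF assms] by (metis of_nat_numeral of_nat_power of_nat_sum)
  also have "\<dots> = int (card (N0 n 1)) + int (card (N0 n d))
                    + (\<Sum>e | e dvd d \<and> 1 < e \<and> e < d. int (card (N0 n e)))"
    by (rule sum_divisors_split[OF \<open>1 < d\<close>])
  also have "card (N0 n 1) = 2"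
    using N0_eq_aperiodic_seqs[of 1 n] \<open>0 < n\<close> card_aperiodic_seqs_1 by simp
  finally show ?thesis
    by simp
qed

theorem lemma10:
  fixes n d :: nat
  assumes "n > 0" and "d > 0"
  shows "(d > 1 \<and> \<not> prime d \<longrightarrow>
           (if d dvd n then
              int (card (N0 n d)) = int (card (aperiodic_seqs d)) \<and>
              int (card (aperiodic_seqs d)) = (\<Sum>e | e dvd d. mobius e * 2 ^ (d div e))
            else
              int (card (N0 n d)) = 2 ^ (d - 1) - 2
                 - (\<Sum>e | e dvd d \<and> 1 < e \<and> e < d. int (card (N0 n e)))))
       \<and> (prime d \<longrightarrow>
           (if d dvd n then
              int (card (N0 n d)) = int (card (aperiodic_seqs d)) \<and>
              int (card (aperiodic_seqs d)) = 2 ^ d - 2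
            else int (card (N0 n d)) = 2 ^ (d - 1) - 2))"
proof (cases "d dvd n")
  case True
  then have "N0 n d = aperiodic_seqs d"
    using assms(1) by (rule N0_eq_aperiodic_seqs)
  with True show ?thesis
    using card_aperiodic_seqs[OF assms(2)] card_aperiodic_seqs_prime[of d] by auto
next
  case False
  then show ?thesis
    using card_N0_not_dvd[OF assms(2) False]
      sum_proper_divisors_prime[of d "\<lambda>e. int (card (N0 n e))"] by auto
qed

end
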